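(* Assume the scores are produced by a symmetric transformation, the intervals $\mathcal{I}_1,\ldots,\mathcal{I}_L$ are fixed (data-independent), and $H_0$ holds ($Z_1,\ldots,Z_n$ i.i.d. with an arbitrary law). Then for every $\alpha\in(0,1)$ and every integer $B\ge1$, $\Pr\{\max_{\ell\in[L]}T_{n,\ell}>t_{\alpha,B}\}\le\alpha.$
   Context: Let $Z_1,\ldots,Z_n$ be independent random elements of a measurable space $\mathcal{Z}$, $\mathcal{D}=(Z_1,\ldots,Z_n)$. A measurable $\mathbb{S}:\mathcal{Z}\times\mathcal{Z}^n\to\mathbb{R}$ is a symmetric transformation if $\mathbb{S}(z;\mathcal{D})=\mathbb{S}(z;\mathcal{D}_\pi)$ for all $z$ and all permutations $\pi$ of $[n]$, where $\mathcal{D}_\pi=(Z_{\pi(1)},\ldots,Z_{\pi(n)})$. Scores: $S_i=\mathbb{S}(Z_i;\mathcal{D})+\epsilon e_i$ with fixed $\epsilon>0$ and $e_i$ i.i.d. $\mathcal{N}(0,1)$ independent of the data. Let $\mathcal{I}_1,\ldots,\mathcal{I}_L$ be nonempty subintervals of $\{1,\ldots,n\}$. Local ranks: $R_{i,\ell}=|\{j\in\mathcal{I}_\ell:S_j\le S_i\}|$ for $i\in\mathcal{I}_\ell$. The aggregation function $\mathbb{A}$ maps finite rank vectors to $[0,\infty)$; $T_{n,\ell}=\mathbb{A}((R_{i,\ell})_{i\in\mathcal{I}_\ell})$ (ranks in increasing order of $i$). For a permutation $\pi$ of $[n]$, $\mathbb{G}(\pi)_\ell=\mathbb{A}\big((|\{j\in\mathcal{I}_\ell:\pi(j)\le\pi(i)\}|)_{i\in\mathcal{I}_\ell}\big)$,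 $\ell\in[L]$. Let $\pi_1,\ldots,\pi_B$ be i.i.d. uniform random permutations of $[n]$, independent of the data, and let $t_{\alpha,B}$ be the $\lceil(1-\alpha)(B+1)\rceil$-th smallest value among $\{\|\mathbb{G}(\pi_b)\|_\infty:b\in[B]\}$ (with $t_{\alpha,B}=+\infty$ if $\lceil(1-\alpha)(B+1)\rceil>B$). *)

theory Defs
  imports "HOL-Probability.Probability" "HOL-Combinatorics.Permutations"
begin

text \<open>Indices are 1-based: the data set is D :: nat \<Rightarrow> 'z, an element of
  PiM {1..n} (\<lambda>_. M) (extensional functions on {1..n}).\<close>

definition interval_family :: "nat \<Rightarrow> nat \<Rightarrow> (nat \<Rightarrow> nat set) \<Rightarrow> bool" where
  "interval_family n L I \<longleftrightarrow>
     (\<forall>l\<in>{1..L}. \<exists>a b. 1 \<le> a \<and> a \<le> b \<and> b \<le> n \<and> I l = {a..b})"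

definition symmetric_transformation ::
    "'z measure \<Rightarrow> nat \<Rightarrow> ('z \<Rightarrow> (nat \<Rightarrow> 'z) \<Rightarrow> real) \<Rightarrow> bool" where
  "symmetric_transformation M n S \<longleftrightarrow>
     (\<lambda>(z, D). S z D) \<in> borel_measurable (M \<Otimes>\<^sub>M PiM {1..n} (\<lambda>_. M)) \<and>
     (\<forall>z\<in>space M. \<forall>D\<in>space (PiM {1..n} (\<lambda>_. M)). \<forall>\<pi>. \<pi> permutes {1..n} \<longrightarrow>
        S z (D \<circ> \<pi>) = S z D)"

definition scores ::
    "('z \<Rightarrow> (nat \<Rightarrow> 'z) \<Rightarrow> real) \<Rightarrow> real \<Rightarrow> (nat \<Rightarrow> 'z) \<Rightarrow> (nat \<Rightarrow> real) \<Rightarrow> nat \<Rightarrow> real" where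
  "scores S \<epsilon> D e i = S (D i) D + \<epsilon> * e i"

definition local_rank :: "(nat \<Rightarrow> nat set) \<Rightarrow> (nat \<Rightarrow> real) \<Rightarrow> nat \<Rightarrow> nat \<Rightarrow> nat" where
  "local_rank I Sc l i = card {j \<in> I l. Sc j \<le> Sc i}"

definition test_stat ::
    "(nat list \<Rightarrow> real) \<Rightarrow> (nat \<Rightarrow> nat set) \<Rightarrow> (nat \<Rightarrow> real) \<Rightarrow> nat \<Rightarrow> real" where
  "test_stat A I Sc l = A (map (local_rank I Sc l) (sorted_list_of_set (I l)))"

definition G_perm ::
    "(nat list \<Rightarrow> real) \<Rightarrow> (nat \<Rightarrow> nat set) \<Rightarrow> (nat \<Rightarrow> nat) \<Rightarrow> nat \<Rightarrow> real" where
  "G_perm A I \<pi> l = A (map (\<lambda>i. card {j \<in> I l. \<pi> j \<le> \<pi> i}) (sorted_list_of_set (I l)))"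

definition G_sup_norm ::
    "(nat list \<Rightarrow> real) \<Rightarrow> (nat \<Rightarrow> nat set) \<Rightarrow> nat \<Rightarrow> (nat \<Rightarrow> nat) \<Rightarrow> real" where
  "G_sup_norm A I L \<pi> = Max ((\<lambda>l. \<bar>G_perm A I \<pi> l\<bar>) ` {1..L})"

definition threshold :: "real \<Rightarrow> nat \<Rightarrow> (nat \<Rightarrow> real) \<Rightarrow> ereal" where
  "threshold \<alpha> B g =
     (let k = nat \<lceil>(1 - \<alpha>) * (real B + 1)\<rceil>
      in if k > B then \<infinity> else ereal (sort (map g [1..<B+1]) ! (k - 1)))"

definition std_normal_measure :: "real measure" where
  "std_normal_measure = density lborel std_normal_density"

definition uniform_perm :: "nat \<Rightarrow> (nat \<Rightarrow> nat) measure" where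
  "uniform_perm n = measure_pmf (pmf_of_set {\<pi>. \<pi> permutes {1..n}})"

end

(*
  Under the null hypothesis the pairs (Z_i, e_i) are i.i.d., and a symmetric transformation
  makes the score vector move along with any permutation of the sample; the Gaussian noise
  makes ties null events. Hence the vector sigma of global ranks of the scores is a uniformly
  distributed permutation, independent of the Monte Carlo permutations pi_1, ..., pi_B.
  All local ranks are functions of sigma, so max_l T_{n,l} = ||G(sigma)||_inf, and the test
  rejects iff at least k = ceil((1 - alpha)(B + 1)) of the values ||G(pi_b)||_inf lie strictly
  below ||G(sigma)||_inf. For B + 1 exchangeable values, at most B + 1 - k of them can have
  k others strictly below, so rejection has probability at most (B + 1 - k)/(B + 1) <= alpha.
*)

theory Submission
  imports Defs
begin

section \<open>Order statistics and the Monte Carlo threshold\<close>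

lemma sorted_nth_less_iff_card_less:
  fixes s :: "'a::linorder list"
  assumes "sorted s" "1 \<le> k" "k \<le> length s"
  shows "s ! (k - 1) < y \<longleftrightarrow> k \<le> card {i. i < length s \<and> s ! i < y}"
proof
  assume less: "s ! (k - 1) < y"
  have "{0..<k} \<subseteq> {i. i < length s \<and> s ! i < y}"
  proof
    fix i assume "i \<in> {0..<k}"
    then have "i \<le> k - 1" "i < length s" using assms by auto
    then have "s ! i \<le> s ! (k - 1)" using assms by (intro sorted_nth_mono) auto
    then show "i \<in> {i. i < length s \<and> s ! i < y}" using less \<open>i < length s\<close> by auto
  qed
  from card_mono[OF _ this] show "k \<le> card {i. i < length s \<and> s ! i < y}" by simp
next
  assume k_le: "k \<le> card {i. i < length s \<and> s ! i < y}"
  show "s ! (k - 1) < y"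
  proof (rule ccontr)
    assume not_less: "\<not> s ! (k - 1) < y"
    have "{i. i < length s \<and> s ! i < y} \<subseteq> {0..<k - 1}"
    proof (rule subsetI, rule ccontr)
      fix i assume i: "i \<in> {i. i < length s \<and> s ! i < y}" "i \<notin> {0..<k - 1}"
      then have "s ! (k - 1) \<le> s ! i" using assms by (intro sorted_nth_mono) auto
      then show False using not_less i by auto
    qed
    from card_mono[OF _ this] have "card {i. i < length s \<and> s ! i < y} \<le> k - 1" by simp
    then show False using k_le assms by auto
  qed
qed

lemma sort_map_nth_less_iff:
  fixes x :: "'b \<Rightarrow> 'a::linorder"
  assumes "distinct xs" "1 \<le> k" "k \<le> length xs"
  shows "sort (map x xs) ! (k - 1) < y \<longleftrightarrow> k \<le> card {b \<in> set xs. x b < y}"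
proof -
  have "card {i. i < length (sort (map x xs)) \<and> sort (map x xs) ! i < y}
      = length (filter (\<lambda>v. v < y) (sort (map x xs)))"
    by (rule length_filter_conv_card[symmetric])
  also have "\<dots> = length (filter (\<lambda>b. x b < y) xs)"
    by (simp add: filter_sort filter_map comp_def)
  also have "\<dots> = card {b \<in> set xs. x b < y}"
    using assms(1) by (simp add: distinct_card[symmetric] set_filter)
  finally show ?thesis
    using assms by (subst sorted_nth_less_iff_card_less) auto
qed

definition threshold_index :: "real \<Rightarrow> nat \<Rightarrow> nat" where
  "threshold_index \<alpha> B = nat \<lceil>(1 - \<alpha>) * (real B + 1)\<rceil>"

lemma threshold_index_pos: "\<alpha> < 1 \<Longrightarrow> 1 \<le> threshold_index \<alpha> B"
proof -
  assume "\<alpha> < 1"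
  then have "0 < (1 - \<alpha>) * (real B + 1)" by simp
  then show ?thesis unfolding threshold_index_def by linarith
qed

lemma threshold_index_tail_le:
  assumes "threshold_index \<alpha> B \<le> B"
  shows "real (B + 1 - threshold_index \<alpha> B) / real (B + 1) \<le> \<alpha>"
proof -
  have "(1 - \<alpha>) * (real B + 1) \<le> real (threshold_index \<alpha> B)"
    unfolding threshold_index_def by linarith
  then show ?thesis using assms by (simp add: field_simps of_nat_diff)
qed

lemma less_threshold_iff:
  assumes "\<alpha> < 1"
  shows "threshold \<alpha> B x < ereal y \<longleftrightarrow>
    threshold_index \<alpha> B \<le> B \<and> threshold_index \<alpha> B \<le> card {b \<in> {1..B}. x b < y}"
proof (cases "threshold_index \<alpha> B \<le> B")
  case True
  have "set [1..<B + 1] = {1..B}" by auto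
  then show ?thesis
    using True threshold_index_pos[OF assms, of B]
      sort_map_nth_less_iff[of "[1..<B + 1]" "threshold_index \<alpha> B" x y]
    by (simp add: threshold_def threshold_index_def[symmetric] Let_def)
qed (simp add: threshold_def threshold_index_def[symmetric] Let_def)

section \<open>Rank vectors\<close>

lemma card_Collect_comp_permutes:
  assumes "\<tau> permutes S"
  shows "card {j \<in> S. P (\<tau> j)} = card {j \<in> S. P j}"
proof -
  have "\<tau> ` {j \<in> S. P (\<tau> j)} = {j \<in> S. P j}"
    using permutes_image[OF assms] by (auto simp: image_iff)
  moreover have "inj_on \<tau> {j \<in> S. P (\<tau> j)}"
    using permutes_inj_on[OF assms] by (rule inj_on_subset) auto
  ultimately show ?thesis by (metis card_image)
qed

text \<open>Global ranks on \<open>{1..n}\<close>, extended by the identity outside \<open>{1..n}\<close> so that the ranks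
  of a tie-free vector form a permutation in the sense of \<open>permutes\<close>.\<close>

definition rank_map :: "nat \<Rightarrow> (nat \<Rightarrow> 'a::linorder) \<Rightarrow> nat \<Rightarrow> nat" where
  "rank_map n x i = (if i \<in> {1..n} then card {j \<in> {1..n}. x j \<le> x i} else i)"

definition self_maps :: "nat \<Rightarrow> (nat \<Rightarrow> nat) set" where
  "self_maps n = {f. f ` {1..n} \<subseteq> {1..n} \<and> (\<forall>i. i \<notin> {1..n} \<longrightarrow> f i = i)}"

lemma rank_map_le_iff:
  assumes "i \<in> {1..n}" "j \<in> {1..n}"
  shows "rank_map n x j \<le> rank_map n x i \<longleftrightarrow> x j \<le> x i"
proof
  assume "x j \<le> x i"
  then have "card {k \<in> {1..n}. x k \<le> x j} \<le> card {k \<in> {1..n}. x k \<le> x i}"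
    by (intro card_mono) auto
  then show "rank_map n x j \<le> rank_map n x i" using assms by (simp add: rank_map_def)
next
  assume le: "rank_map n x j \<le> rank_map n x i"
  show "x j \<le> x i"
  proof (rule ccontr)
    assume "\<not> x j \<le> x i"
    then have "{k \<in> {1..n}. x k \<le> x i} \<subset> {k \<in> {1..n}. x k \<le> x j}"
      using assms by auto
    then have "card {k \<in> {1..n}. x k \<le> x i} < card {k \<in> {1..n}. x k \<le> x j}"
      by (intro psubset_card_mono) auto
    then show False using le assms by (simp add: rank_map_def)
  qed
qed

lemma rank_map_in_self_maps: "rank_map n x \<in> self_maps n"
proof -
  have "rank_map n x i \<in> {1..n}" if i: "i \<in> {1..n}" for i
  proof -
    have "0 < card {j \<in> {1..n}. x j \<le> x i}"
      using i by (subst card_gt_0_iff) auto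
    moreover have "card {j \<in> {1..n}. x j \<le> x i} \<le> card {1..n}"
      by (intro card_mono) auto
    ultimately show ?thesis using i by (simp add: rank_map_def)
  qed
  then show ?thesis by (auto simp: self_maps_def rank_map_def)
qed

lemma finite_self_maps: "finite (self_maps n)"
proof -
  have "self_maps n \<subseteq> (\<lambda>h i. if i \<in> {1..n} then h i else i) ` PiE {1..n} (\<lambda>_. {1..n})"
  proof
    fix f assume f: "f \<in> self_maps n"
    then have "f = (\<lambda>i. if i \<in> {1..n} then restrict f {1..n} i else i)"
      by (auto simp: self_maps_def fun_eq_iff)
    moreover have "restrict f {1..n} \<in> PiE {1..n} (\<lambda>_. {1..n})"
      using f by (auto simp: self_maps_def)
    ultimately show "f \<in> (\<lambda>h i. if i \<in> {1..n} then h i else i) ` PiE {1..n} (\<lambda>_. {1..n})"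
      by blast
  qed
  then show ?thesis by (rule finite_subset) (simp add: finite_PiE)
qed

lemma permutes_in_self_maps: "f permutes {1..n} \<Longrightarrow> f \<in> self_maps n"
  using permutes_image[of f "{1..n}"] permutes_not_in[of f "{1..n}"] by (auto simp: self_maps_def)

lemma rank_map_eq_iff:
  assumes "f \<in> self_maps n"
  shows "rank_map n x = f \<longleftrightarrow> (\<forall>i\<in>{1..n}. card {j \<in> {1..n}. x j \<le> x i} = f i)"
  using assms by (auto simp: rank_map_def self_maps_def fun_eq_iff)

lemma rank_map_permutes:
  assumes "inj_on x {1..n}"
  shows "rank_map n x permutes {1..n}"
proof (rule bij_imp_permutes)
  have inj: "inj_on (rank_map n x) {1..n}"
  proof (rule inj_onI)
    fix i j assume "i \<in> {1..n}" "j \<in> {1..n}" "rank_map n x i = rank_map n x j"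
    with rank_map_le_iff[of i n j x] rank_map_le_iff[of j n i x] assms show "i = j"
      by (auto dest: inj_onD)
  qed
  moreover have "rank_map n x ` {1..n} \<subseteq> {1..n}"
    using rank_map_in_self_maps[of n x] by (simp add: self_maps_def)
  ultimately have "rank_map n x ` {1..n} = {1..n}"
    by (intro card_subset_eq) (auto simp: card_image)
  with inj show "bij_betw (rank_map n x) {1..n} {1..n}" by (simp add: bij_betw_def)
qed (auto simp: rank_map_def)

lemma rank_map_cong:
  "(\<And>i. i \<in> {1..n} \<Longrightarrow> x i = y i) \<Longrightarrow> rank_map n x = rank_map n y"
  unfolding rank_map_def by (intro ext if_cong refl arg_cong[where f=card]) auto

lemma rank_map_comp_permutes:
  assumes \<tau>: "\<tau> permutes {1..n}"
  shows "rank_map n (x \<circ> \<tau>) = rank_map n x \<circ> \<tau>"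
proof
  fix i
  show "rank_map n (x \<circ> \<tau>) i = (rank_map n x \<circ> \<tau>) i"
  proof (cases "i \<in> {1..n}")
    case True
    then show ?thesis
      using permutes_in_image[OF \<tau>] card_Collect_comp_permutes[OF \<tau>, of "\<lambda>j. x j \<le> x (\<tau> i)"]
      by (simp add: rank_map_def)
  next
    case False
    moreover from False have "\<tau> i = i" by (rule permutes_not_in[OF \<tau>])
    ultimately show ?thesis by (auto simp: rank_map_def)
  qed
qed

lemma test_stat_eq_G_perm_rank_map:
  assumes "I l \<subseteq> {1..n}"
  shows "test_stat A I x l = G_perm A I (rank_map n x) l"
proof -
  have "local_rank I x l i = card {j \<in> I l. rank_map n x j \<le> rank_map n x i}" if "i \<in> I l" for i
  proof -
    have "x j \<le> x i \<longleftrightarrow> rank_map n x j \<le> rank_map n x i" if "j \<in> I l" for j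
      using \<open>i \<in> I l\<close> that assms by (intro rank_map_le_iff[symmetric]) auto
    then show ?thesis unfolding local_rank_def by (metis (no_types, lifting) Collect_cong)
  qed
  moreover have "finite (I l)" using assms finite_subset by blast
  ultimately show ?thesis unfolding test_stat_def G_perm_def
    by (intro arg_cong[where f=A] map_cong) auto
qed

lemma interval_family_subset:
  "interval_family n L I \<Longrightarrow> l \<in> {1..L} \<Longrightarrow> I l \<subseteq> {1..n}"
  unfolding interval_family_def by fastforce

lemma Max_test_stat_eq_G_sup_norm:
  assumes "interval_family n L I" "\<And>xs. 0 \<le> A xs"
  shows "Max ((\<lambda>l. test_stat A I x l) ` {1..L}) = G_sup_norm A I L (rank_map n x)"
proof -
  have "test_stat A I x l = \<bar>G_perm A I (rank_map n x) l\<bar>" if "l \<in> {1..L}" for l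
    using test_stat_eq_G_perm_rank_map[of I l n, OF interval_family_subset[OF assms(1) that]] assms(2)
    by (simp add: G_perm_def)
  then show ?thesis unfolding G_sup_norm_def by (metis (no_types, lifting) image_cong)
qed

section \<open>Exceedances among exchangeable values\<close>

text \<open>Index \<open>i\<close> is \<open>k\<close>-exceeding if at least \<open>k\<close> values lie strictly below \<open>v i\<close>. The
  exceeding index with the smallest value has \<open>k\<close> values below it, and none of them is exceeding.\<close>

lemma card_exceeding_le:
  fixes v :: "'i \<Rightarrow> 'a::linorder"
  assumes "finite J"
  shows "card {i \<in> J. k \<le> card {j \<in> J. v j < v i}} \<le> card J - k"
proof (cases "{i \<in> J. k \<le> card {j \<in> J. v j < v i}} = {}")
  case False
  define W where "W = {i \<in> J. k \<le> card {j \<in> J. v j < v i}}"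
  have W: "finite W" "W \<noteq> {}" "W \<subseteq> J" using assms False by (auto simp: W_def)
  define i0 where "i0 = arg_min_on v W"
  have i0: "i0 \<in> W" "\<And>i. i \<in> W \<Longrightarrow> \<not> v i < v i0"
    using arg_min_if_finite[OF W(1,2), of v] unfolding i0_def by auto
  have "k \<le> card {j \<in> J. v j < v i0}" using i0(1) by (simp add: W_def)
  also have "\<dots> \<le> card (J - W)"
    using i0(2) assms by (intro card_mono) auto
  also have "\<dots> = card J - card W"
    using W by (simp add: card_Diff_subset)
  finally have "k \<le> card J - card W" .
  moreover have "card W \<le> card J" using W assms by (intro card_mono)
  ultimately show ?thesis unfolding W_def by linarith
next
  case True
  then show ?thesis by (simp only: card.empty le0)
qed

lemma card_PiE_Collect_comp_permutes:
  assumes \<tau>: "\<tau> permutes J"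
  shows "card {h \<in> PiE J (\<lambda>_. P). Q (h \<circ> \<tau>)} = card {h \<in> PiE J (\<lambda>_. P). Q h}"
proof (rule bij_betw_same_card[of "\<lambda>h. h \<circ> \<tau>"], rule bij_betwI[where g="\<lambda>h. h \<circ> inv \<tau>"])
  have comp_PiE: "h \<circ> \<sigma> \<in> PiE J (\<lambda>_. P)" if "h \<in> PiE J (\<lambda>_. P)" "\<sigma> permutes J" for h \<sigma>
    using that by (auto simp: PiE_iff extensional_def permutes_in_image permutes_not_in)
  show "(\<lambda>h. h \<circ> \<tau>) \<in> {h \<in> PiE J (\<lambda>_. P). Q (h \<circ> \<tau>)} \<rightarrow> {h \<in> PiE J (\<lambda>_. P). Q h}"
    using comp_PiE[OF _ \<tau>] by auto
  show "(\<lambda>h. h \<circ> inv \<tau>) \<in> {h \<in> PiE J (\<lambda>_. P). Q h} \<rightarrow> {h \<in> PiE J (\<lambda>_. P). Q (h \<circ> \<tau>)}"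
    using comp_PiE[OF _ permutes_inv[OF \<tau>]] permutes_inv_o(2)[OF \<tau>] by (auto simp: comp_assoc)
qed (simp_all add: comp_assoc permutes_inv_o[OF \<tau>])

lemma card_exceeding_at_eq:
  fixes g :: "'b \<Rightarrow> 'a::linorder"
  assumes "i \<in> J" "i' \<in> J"
  shows "card {h \<in> PiE J (\<lambda>_. P). k \<le> card {j \<in> J. g (h j) < g (h i)}}
       = card {h \<in> PiE J (\<lambda>_. P). k \<le> card {j \<in> J. g (h j) < g (h i')}}"
proof -
  define \<tau> where "\<tau> = Transposition.transpose i i'"
  have \<tau>: "\<tau> permutes J" unfolding \<tau>_def using assms by (rule permutes_swap_id)
  have "card {j \<in> J. g (h (\<tau> j)) < g (h (\<tau> i'))} = card {j \<in> J. g (h j) < g (h i)}" for h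
    using card_Collect_comp_permutes[OF \<tau>, of "\<lambda>j. g (h j) < g (h i)"] by (simp add: \<tau>_def)
  then show ?thesis
    using card_PiE_Collect_comp_permutes[OF \<tau>, of P "\<lambda>h. k \<le> card {j \<in> J. g (h j) < g (h i')}"]
    by simp
qed

text \<open>Double counting: by symmetry every index is exceeding for equally many assignments, and
  each assignment has at most \<open>card J - k\<close> exceeding indices.\<close>

lemma card_exceeding_at_le:
  fixes g :: "'b \<Rightarrow> 'a::linorder"
  assumes "finite P" "finite J" "i0 \<in> J"
  defines "T \<equiv> PiE J (\<lambda>_. P)"
  shows "card J * card {h \<in> T. k \<le> card {j \<in> J. g (h j) < g (h i0)}} \<le> (card J - k) * card T"
proof -
  have "finite T" unfolding T_def using assms by (simp add: finite_PiE)
  have "card J * card {h \<in> T. k \<le> card {j \<in> J. g (h j) < g (h i0)}}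
      = (\<Sum>i\<in>J. card {h \<in> T. k \<le> card {j \<in> J. g (h j) < g (h i)}})"
    unfolding T_def using card_exceeding_at_eq[OF _ assms(3), of _ P k g] by simp
  also have "\<dots> = (\<Sum>i\<in>J. \<Sum>h\<in>T. if k \<le> card {j \<in> J. g (h j) < g (h i)} then 1 else 0)"
    using \<open>finite T\<close> by (simp add: sum.If_cases Int_def)
  also have "\<dots> = (\<Sum>h\<in>T. card {i \<in> J. k \<le> card {j \<in> J. g (h j) < g (h i)}})"
    using assms(2) by (subst sum.swap) (simp add: sum.If_cases Int_def)
  also have "\<dots> \<le> (\<Sum>h\<in>T. card J - k)"
    using assms(2) by (intro sum_mono card_exceeding_le)
  finally show ?thesis by (simp add: mult.commute)
qed

section \<open>Products of uniform distributions, permutations and ties\<close>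

lemma borel_measurable_card_Collect:
  assumes "finite J" "\<And>j. j \<in> J \<Longrightarrow> {x \<in> space X. P j x} \<in> sets X"
  shows "(\<lambda>x. real (card {j \<in> J. P j x})) \<in> borel_measurable X"
proof -
  have "real (card {j \<in> J. P j x}) = (\<Sum>j\<in>J. if P j x then 1 else 0)" for x
    using assms(1) by (simp add: sum.If_cases Int_def)
  moreover have "(\<lambda>x. \<Sum>j\<in>J. if P j x then 1 else 0 :: real) \<in> borel_measurable X"
    using assms(2) by (intro borel_measurable_sum measurable_If measurable_const) auto
  ultimately show ?thesis by simp
qed

lemma distr_restrict_Pi_pmf:
  assumes "finite I"
  shows "distr (measure_pmf (Pi_pmf I undefined p)) (PiM I (\<lambda>i. measure_pmf (p i))) (\<lambda>x. restrict x I)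
         = PiM I (\<lambda>i. measure_pmf (p i))"
proof (rule product_sigma_finite.PiM_eqI)
  show "product_sigma_finite (\<lambda>i. measure_pmf (p i))"
    by (intro product_prob_space.axioms(1) product_prob_spaceI measure_pmf.prob_space_axioms)
next
  fix A assume A: "\<And>i. i \<in> I \<Longrightarrow> A i \<in> sets (measure_pmf (p i))"
  have "Pi\<^sub>E I A \<in> sets (PiM I (\<lambda>i. measure_pmf (p i)))"
    using A by (intro sets_PiM_I_finite assms) auto
  then have "emeasure (distr (measure_pmf (Pi_pmf I undefined p)) (PiM I (\<lambda>i. measure_pmf (p i)))
              (\<lambda>x. restrict x I)) (Pi\<^sub>E I A) =
             emeasure (measure_pmf (Pi_pmf I undefined p)) ((\<lambda>x. restrict x I) -` Pi\<^sub>E I A)"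
    by (subst emeasure_distr) (auto simp: space_PiM)
  also have "\<dots> = emeasure (measure_pmf (Pi_pmf I undefined p)) (PiE_dflt I undefined A)"
    by (intro emeasure_eq_AE AE_pmfI) (auto simp: PiE_dflt_def set_Pi_pmf assms)
  also have "\<dots> = (\<Prod>i\<in>I. emeasure (measure_pmf (p i)) (A i))"
    by (simp add: measure_pmf.emeasure_eq_measure measure_Pi_pmf_PiE_dflt assms prod_ennreal)
  finally show "emeasure (distr (measure_pmf (Pi_pmf I undefined p)) (PiM I (\<lambda>i. measure_pmf (p i)))
              (\<lambda>x. restrict x I)) (Pi\<^sub>E I A) = (\<Prod>i\<in>I. emeasure (measure_pmf (p i)) (A i))" .
qed (use assms in simp_all)

lemma emeasure_PiM_pmf_of_set:
  assumes "finite I" "finite P" "P \<noteq> {}"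
    and X: "X \<in> sets (PiM I (\<lambda>_. measure_pmf (pmf_of_set P)))"
  shows "emeasure (PiM I (\<lambda>_. measure_pmf (pmf_of_set P))) X
       = ennreal (card (PiE I (\<lambda>_. P) \<inter> X) / card (PiE I (\<lambda>_. P)))"
proof -
  define Q where "Q = PiE I (\<lambda>_. P)"
  have Q: "finite Q" "Q \<noteq> {}"
    unfolding Q_def using assms by (auto simp: finite_PiE PiE_eq_empty_iff)
  have "PiE_dflt I undefined (\<lambda>_. P) = Q"
    by (auto simp: Q_def PiE_dflt_def PiE_def extensional_def)
  then have uniform: "Pi_pmf I undefined (\<lambda>_. pmf_of_set P) = pmf_of_set Q"
    using assms by (simp add: Pi_pmf_of_set)
  have "emeasure (PiM I (\<lambda>_. measure_pmf (pmf_of_set P))) X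
      = emeasure (distr (measure_pmf (pmf_of_set Q)) (PiM I (\<lambda>_. measure_pmf (pmf_of_set P)))
          (\<lambda>x. restrict x I)) X"
    using distr_restrict_Pi_pmf[OF assms(1), of "\<lambda>_. pmf_of_set P"] by (simp add: uniform)
  also have "\<dots> = emeasure (measure_pmf (pmf_of_set Q)) ((\<lambda>x. restrict x I) -` X)"
    using X by (subst emeasure_distr) (auto simp: space_PiM)
  also have "\<dots> = ennreal (card (Q \<inter> ((\<lambda>x. restrict x I) -` X)) / card Q)"
    using Q by (simp add: measure_pmf.emeasure_eq_measure measure_pmf_of_set)
  also have "Q \<inter> ((\<lambda>x. restrict x I) -` X) = Q \<inter> X"
    by (auto simp: Q_def PiE_restrict)
  finally show ?thesis unfolding Q_def .
qed

lemma emeasure_PiM_pmf_of_set_exceeding_le: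
  fixes g :: "'a \<Rightarrow> real" and k :: nat
  assumes "finite P" "P \<noteq> {}" "finite J" "i \<in> J"
  defines "U \<equiv> PiM J (\<lambda>_. measure_pmf (pmf_of_set P))"
  defines "W \<equiv> {h \<in> space U. k \<le> card {j \<in> J. g (h j) < g (h i)}}"
  shows "W \<in> sets U" and "emeasure U W \<le> ennreal (real (card J - k) / real (card J))"
proof -
  have "(\<lambda>h. g (h j)) \<in> borel_measurable U" if "j \<in> J" for j
    unfolding U_def using measurable_component_singleton[OF that] by (rule measurable_compose) simp
  then have "(\<lambda>h. real (card {j \<in> J. g (h j) < g (h i)})) \<in> borel_measurable U"
    using assms(3,4) by (intro borel_measurable_card_Collect borel_measurable_less)
  then have "{h \<in> space U. real k \<le> real (card {j \<in> J. g (h j) < g (h i)})} \<in> sets U"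
    by (intro borel_measurable_le) auto
  then show W: "W \<in> sets U" unfolding W_def by simp
  define T where "T = PiE J (\<lambda>_. P)"
  have "T \<inter> W = {h \<in> T. k \<le> card {j \<in> J. g (h j) < g (h i)}}"
    by (auto simp: W_def U_def T_def space_PiM)
  moreover have "card J * card {h \<in> T. k \<le> card {j \<in> J. g (h j) < g (h i)}} \<le> (card J - k) * card T"
    unfolding T_def using assms by (intro card_exceeding_at_le)
  moreover have "0 < card J" "0 < card T"
    using assms by (auto simp: T_def card_gt_0_iff finite_PiE PiE_eq_empty_iff)
  ultimately have "real (card (T \<inter> W)) / card T \<le> real (card J - k) / card J"
    by (simp add: divide_simps flip: of_nat_mult) (simp add: mult.commute)
  then show "emeasure U W \<le> ennreal (real (card J - k) / real (card J))"
    using emeasure_PiM_pmf_of_set[OF assms(3,1,2) W[unfolded U_def]]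
    by (simp add: U_def T_def ennreal_leI)
qed

lemma distr_pair_measure_assoc:
  assumes A: "sigma_finite_measure A" and B: "sigma_finite_measure B" and C: "sigma_finite_measure C"
  shows "distr (A \<Otimes>\<^sub>M (B \<Otimes>\<^sub>M C)) ((A \<Otimes>\<^sub>M B) \<Otimes>\<^sub>M C) (\<lambda>(a, b, c). ((a, b), c))
       = (A \<Otimes>\<^sub>M B) \<Otimes>\<^sub>M C"
proof (rule pair_measure_eqI[symmetric])
  interpret B: sigma_finite_measure B by (rule B)
  interpret C: sigma_finite_measure C by (rule C)
  interpret BC: sigma_finite_measure "B \<Otimes>\<^sub>M C" by (rule sigma_finite_pair_measure[OF B C])
  show "sigma_finite_measure (A \<Otimes>\<^sub>M B)" by (rule sigma_finite_pair_measure[OF A B])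
  fix X Z assume X: "X \<in> sets (A \<Otimes>\<^sub>M B)" and Z: "Z \<in> sets C"
  have assoc: "(\<lambda>(a, b, c). ((a, b), c)) \<in> A \<Otimes>\<^sub>M (B \<Otimes>\<^sub>M C) \<rightarrow>\<^sub>M (A \<Otimes>\<^sub>M B) \<Otimes>\<^sub>M C"
    by measurable
  have slice: "Pair a -` ((\<lambda>(a, b, c). ((a, b), c)) -` (X \<times> Z) \<inter> space (A \<Otimes>\<^sub>M (B \<Otimes>\<^sub>M C)))
      = (Pair a -` X) \<times> Z" if "a \<in> space A" for a
    using that X[THEN sets.sets_into_space] Z[THEN sets.sets_into_space]
    by (auto simp: space_pair_measure)
  have "emeasure (distr (A \<Otimes>\<^sub>M (B \<Otimes>\<^sub>M C)) ((A \<Otimes>\<^sub>M B) \<Otimes>\<^sub>M C) (\<lambda>(a, b, c). ((a, b), c))) (X \<times> Z)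
      = emeasure (A \<Otimes>\<^sub>M (B \<Otimes>\<^sub>M C))
          ((\<lambda>(a, b, c). ((a, b), c)) -` (X \<times> Z) \<inter> space (A \<Otimes>\<^sub>M (B \<Otimes>\<^sub>M C)))"
    using X Z assoc by (simp add: emeasure_distr)
  also have "\<dots> = (\<integral>\<^sup>+ a. emeasure (B \<Otimes>\<^sub>M C)
      (Pair a -` ((\<lambda>(a, b, c). ((a, b), c)) -` (X \<times> Z) \<inter> space (A \<Otimes>\<^sub>M (B \<Otimes>\<^sub>M C)))) \<partial>A)"
    using X Z by (intro BC.emeasure_pair_measure_alt measurable_sets[OF assoc]) simp
  also have "\<dots> = (\<integral>\<^sup>+ a. emeasure (B \<Otimes>\<^sub>M C) ((Pair a -` X) \<times> Z) \<partial>A)"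
    by (intro nn_integral_cong) (simp only: slice)
  also have "\<dots> = (\<integral>\<^sup>+ a. emeasure B (Pair a -` X) * emeasure C Z \<partial>A)"
    using X Z by (simp add: C.emeasure_pair_measure_Times sets_Pair1)
  also have "\<dots> = emeasure (A \<Otimes>\<^sub>M B) X * emeasure C Z"
    using X by (simp add: nn_integral_multc B.measurable_emeasure_Pair B.emeasure_pair_measure_alt)
  finally show "emeasure (A \<Otimes>\<^sub>M B) X * emeasure C Z
      = emeasure (distr (A \<Otimes>\<^sub>M (B \<Otimes>\<^sub>M C)) ((A \<Otimes>\<^sub>M B) \<Otimes>\<^sub>M C) (\<lambda>(a, b, c). ((a, b), c))) (X \<times> Z)"
    by simp
qed (simp_all add: C)

lemma prob_space_std_normal_measure: "prob_space std_normal_measure"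
  unfolding std_normal_measure_def by (rule prob_space_normal_density) simp

lemma sets_std_normal_measure [measurable_cong]: "sets std_normal_measure = sets borel"
  by (simp add: std_normal_measure_def)

lemma emeasure_std_normal_measure_singleton: "emeasure std_normal_measure {a} = 0"
proof -
  have "emeasure std_normal_measure {a}
      = (\<integral>\<^sup>+ y. ennreal (std_normal_density y) * indicator {a} y \<partial>lborel)"
    unfolding std_normal_measure_def by (rule emeasure_density) auto
  also have "\<dots> = 0"
    by (subst nn_integral_0_iff_AE) (auto intro: eventually_mono[OF AE_lborel_singleton[of a]])
  finally show ?thesis .
qed

lemma emeasure_PiM_shifted_diagonal:
  fixes N :: "real measure"
  assumes N: "prob_space N" "sets N = sets borel" "\<And>a. emeasure N {a} = 0"
    and I: "finite I" "i \<in> I" "j \<in> I" "i \<noteq> j"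
  shows "emeasure (PiM I (\<lambda>_. N)) {e \<in> space (PiM I (\<lambda>_. N)). e i = e j + c} = 0"
proof -
  interpret product_prob_space "\<lambda>_. N" by (intro product_prob_spaceI N(1))
  define J where "J = I - {i}"
  have J: "I = insert i J" "i \<notin> J" "finite J" "j \<in> J" using I unfolding J_def by auto
  define X where "X = {e \<in> space (PiM I (\<lambda>_. N)). e i = e j + c}"
  have space_N: "space N = UNIV" using sets_eq_imp_space_eq[OF N(2)] by simp
  have X: "X \<in> sets (PiM I (\<lambda>_. N))"
    unfolding X_def using N(2) I(2,3) by measurable
  have "emeasure (PiM I (\<lambda>_. N)) X = (\<integral>\<^sup>+ e. indicator X e \<partial>PiM (insert i J) (\<lambda>_. N))"
    using X J by simp
  also have "\<dots> = (\<integral>\<^sup>+ x. (\<integral>\<^sup>+ y. indicator X (x(i := y)) \<partial>N) \<partial>PiM J (\<lambda>_. N))"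
    using X J by (intro product_nn_integral_insert) auto
  also have "\<dots> = (\<integral>\<^sup>+ x. 0 \<partial>PiM J (\<lambda>_. N))"
  proof (rule nn_integral_cong)
    fix x assume x: "x \<in> space (PiM J (\<lambda>_. N))"
    then have "x(i := y) \<in> space (PiM I (\<lambda>_. N))" for y
      using J by (auto simp: space_PiM space_N intro!: PiE_fun_upd)
    then have "indicator X (x(i := y)) = (indicator {x j + c} y :: ennreal)" for y
      using J unfolding X_def by (auto simp: indicator_def)
    then show "(\<integral>\<^sup>+ y. indicator X (x(i := y)) \<partial>N) = 0"
      using N(2,3) by (simp add: space_N)
  qed
  finally show ?thesis unfolding X_def by simp
qed

lemma measurable_comp_permutes:
  assumes "\<tau> permutes I"
  shows "(\<lambda>x. x \<circ> \<tau>) \<in> PiM I (\<lambda>_. N) \<rightarrow>\<^sub>M PiM I (\<lambda>_. N)"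
proof -
  have "(\<lambda>x. \<lambda>i\<in>I. x (\<tau> i)) \<in> PiM I (\<lambda>_. N) \<rightarrow>\<^sub>M PiM I (\<lambda>_. N)"
    using permutes_in_image[OF assms]
    by (intro measurable_restrict measurable_component_singleton) auto
  moreover have "(\<lambda>i\<in>I. x (\<tau> i)) = x \<circ> \<tau>" if "x \<in> space (PiM I (\<lambda>_. N))" for x
    using that assms by (auto simp: fun_eq_iff space_PiM PiE_def extensional_def permutes_not_in)
  ultimately show ?thesis by (rule measurable_cong[THEN iffD1, rotated]) simp
qed

lemma distr_PiM_comp_permutes:
  assumes "prob_space N" "\<tau> permutes I"
  shows "distr (PiM I (\<lambda>_. N)) (PiM I (\<lambda>_. N)) (\<lambda>x. x \<circ> \<tau>) = PiM I (\<lambda>_. N)"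
proof -
  have "distr (PiM I (\<lambda>_. N)) (PiM I (\<lambda>_. N)) (\<lambda>x. \<lambda>i\<in>I. x (\<tau> i)) = PiM I (\<lambda>_. N)"
    using distr_PiM_reindex[of I "\<lambda>_. N" \<tau> I] assms
    by (simp add: permutes_inj_on permutes_in_image Pi_iff)
  moreover have "distr (PiM I (\<lambda>_. N)) (PiM I (\<lambda>_. N)) (\<lambda>x. x \<circ> \<tau>)
      = distr (PiM I (\<lambda>_. N)) (PiM I (\<lambda>_. N)) (\<lambda>x. \<lambda>i\<in>I. x (\<tau> i))"
    using assms(2)
    by (intro distr_cong) (auto simp: fun_eq_iff space_PiM PiE_def extensional_def permutes_not_in)
  ultimately show ?thesis by simp
qed

section \<open>The rank vector of the scores under the null hypothesis\<close>

locale symmetric_scoring =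
  fixes M :: "'z measure" and n :: nat and S :: "'z \<Rightarrow> (nat \<Rightarrow> 'z) \<Rightarrow> real" and \<epsilon> :: real
  assumes prob_space_M: "prob_space M"
    and symmetric: "symmetric_transformation M n S"
    and noise_pos: "\<epsilon> > 0"
begin

abbreviation data :: "(nat \<Rightarrow> 'z) measure" where
  "data \<equiv> PiM {1..n} (\<lambda>_. M)"

abbreviation noise :: "(nat \<Rightarrow> real) measure" where
  "noise \<equiv> PiM {1..n} (\<lambda>_. std_normal_measure)"

abbreviation sample :: "((nat \<Rightarrow> 'z) \<times> (nat \<Rightarrow> real)) measure" where
  "sample \<equiv> data \<Otimes>\<^sub>M noise"

definition score :: "(nat \<Rightarrow> 'z) \<times> (nat \<Rightarrow> real) \<Rightarrow> nat \<Rightarrow> real" where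
  "score \<omega> = scores S \<epsilon> (fst \<omega>) (snd \<omega>)"

definition ranks :: "(nat \<Rightarrow> 'z) \<times> (nat \<Rightarrow> real) \<Rightarrow> nat \<Rightarrow> nat" where
  "ranks \<omega> = rank_map n (score \<omega>)"

lemma prob_space_data: "prob_space data"
  by (intro prob_space_PiM prob_space_M)

lemma prob_space_noise: "prob_space noise"
  by (intro prob_space_PiM prob_space_std_normal_measure)

lemma prob_space_sample: "prob_space sample"
  by (intro prob_space_pair prob_space_data prob_space_noise)

lemma measurable_score:
  assumes "i \<in> {1..n}"
  shows "(\<lambda>\<omega>. score \<omega> i) \<in> borel_measurable sample"
proof -
  have "(\<lambda>(z, D). S z D) \<in> borel_measurable (M \<Otimes>\<^sub>M data)"
    using symmetric by (simp add: symmetric_transformation_def)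
  moreover have "(\<lambda>\<omega>. (fst \<omega> i, fst \<omega>)) \<in> sample \<rightarrow>\<^sub>M M \<Otimes>\<^sub>M data"
    by (intro measurable_Pair measurable_fst
        measurable_compose[OF measurable_fst measurable_component_singleton[OF assms]])
  ultimately have "(\<lambda>\<omega>. S (fst \<omega> i) (fst \<omega>)) \<in> borel_measurable sample"
    using measurable_compose by fastforce
  moreover have "(\<lambda>\<omega>. snd \<omega> i) \<in> borel_measurable sample"
    using assms by measurable
  ultimately show ?thesis unfolding score_def scores_def
    by (intro borel_measurable_add borel_measurable_times measurable_const) auto
qed

lemma sets_ranks_eq: "{\<omega> \<in> space sample. ranks \<omega> = f} \<in> sets sample"
proof (cases "f \<in> self_maps n")
  case True
  have "{\<omega> \<in> space sample. ranks \<omega> = f} = {\<omega> \<in> space sample. \<forall>i\<in>{1..n}.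
      real (card {j \<in> {1..n}. score \<omega> j \<le> score \<omega> i}) = real (f i)}"
    using True by (simp add: ranks_def rank_map_eq_iff)
  also have "\<dots> \<in> sets sample"
    by (intro sets.sets_Collect_finite_All borel_measurable_eq borel_measurable_card_Collect
        borel_measurable_le measurable_score measurable_const) auto
  finally show ?thesis .
next
  case False
  then have empty: "{\<omega> \<in> space sample. ranks \<omega> = f} = {}"
    using rank_map_in_self_maps by (auto simp: ranks_def)
  show ?thesis unfolding empty by (rule sets.empty_sets)
qed

lemma measurable_ranks: "ranks \<in> sample \<rightarrow>\<^sub>M count_space UNIV"
proof -
  have "ranks \<in> sample \<rightarrow>\<^sub>M count_space (self_maps n)"
    using sets_ranks_eq rank_map_in_self_maps
    by (subst measurable_count_space_eq2[OF finite_self_maps])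
       (auto simp: ranks_def vimage_def Int_def conj_commute)
  from measurable_compose[OF this measurable_count_space] show ?thesis by simp
qed

text \<open>Given the data, a tie between two scores confines the noise to a shifted diagonal.\<close>

lemma ties_null:
  assumes "i \<in> {1..n}" "j \<in> {1..n}" "i \<noteq> j"
  shows "{\<omega> \<in> space sample. score \<omega> i = score \<omega> j} \<in> null_sets sample"
proof -
  interpret noise: prob_space noise by (rule prob_space_noise)
  define X where "X = {\<omega> \<in> space sample. score \<omega> i = score \<omega> j}"
  have X: "X \<in> sets sample"
    unfolding X_def using assms(1,2) by (intro borel_measurable_eq measurable_score)
  have "emeasure sample X = (\<integral>\<^sup>+ D. emeasure noise (Pair D -` X) \<partial>data)"
    by (rule noise.emeasure_pair_measure_alt[OF X])
  also have "\<dots> = (\<integral>\<^sup>+ D. 0 \<partial>data)"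
  proof (rule nn_integral_cong)
    fix D assume D: "D \<in> space data"
    define c where "c = (S (D j) D - S (D i) D) / \<epsilon>"
    have "S (D i) D + \<epsilon> * e i = S (D j) D + \<epsilon> * e j \<longleftrightarrow> e i = e j + c" for e
      using noise_pos unfolding c_def by (auto simp: field_simps)
    then have "Pair D -` X = {e \<in> space noise. e i = e j + c}"
      unfolding X_def score_def scores_def using D by (auto simp: space_pair_measure)
    then show "emeasure noise (Pair D -` X) = 0"
      using emeasure_PiM_shifted_diagonal[OF prob_space_std_normal_measure sets_std_normal_measure
          emeasure_std_normal_measure_singleton _ assms]
      by simp
  qed
  finally show ?thesis using X unfolding X_def by (intro null_setsI) auto
qed

lemma emeasure_ranks_not_permutes:
  assumes "\<not> f permutes {1..n}"
  shows "emeasure sample {\<omega> \<in> space sample. ranks \<omega> = f} = 0"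
proof -
  define ties where "ties = (\<Union>i\<in>{1..n}. \<Union>j\<in>{1..n} - {i}.
    {\<omega> \<in> space sample. score \<omega> i = score \<omega> j})"
  have "ties \<in> null_sets sample"
    unfolding ties_def by (intro null_sets.finite_UN ties_null) auto
  moreover have "{\<omega> \<in> space sample. ranks \<omega> = f} \<subseteq> ties"
  proof
    fix \<omega> assume \<omega>: "\<omega> \<in> {\<omega> \<in> space sample. ranks \<omega> = f}"
    then have "\<not> inj_on (score \<omega>) {1..n}"
      using rank_map_permutes assms by (auto simp: ranks_def)
    then show "\<omega> \<in> ties" using \<omega> unfolding ties_def inj_on_def by blast
  qed
  ultimately show ?thesis
    using sets_ranks_eq by (blast intro: null_setsD1 null_sets_subset)
qed

definition permute_sample ::
    "(nat \<Rightarrow> nat) \<Rightarrow> (nat \<Rightarrow> 'z) \<times> (nat \<Rightarrow> real) \<Rightarrow> (nat \<Rightarrow> 'z) \<times> (nat \<Rightarrow> real)" where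
  "permute_sample \<tau> \<omega> = (fst \<omega> \<circ> \<tau>, snd \<omega> \<circ> \<tau>)"

lemma measurable_permute_sample:
  "\<tau> permutes {1..n} \<Longrightarrow> permute_sample \<tau> \<in> sample \<rightarrow>\<^sub>M sample"
  unfolding permute_sample_def
  by (intro measurable_Pair measurable_compose[OF measurable_fst measurable_comp_permutes]
      measurable_compose[OF measurable_snd measurable_comp_permutes])

lemma distr_permute_sample:
  assumes \<tau>: "\<tau> permutes {1..n}"
  shows "distr sample sample (permute_sample \<tau>) = sample"
proof -
  have "distr data data (\<lambda>x. x \<circ> \<tau>) \<Otimes>\<^sub>M distr noise noise (\<lambda>x. x \<circ> \<tau>)
      = distr sample sample (\<lambda>(x, y). (x \<circ> \<tau>, y \<circ> \<tau>))"
    using distr_PiM_comp_permutes[OF prob_space_std_normal_measure \<tau>] prob_space_noise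
    by (intro pair_measure_distr measurable_comp_permutes \<tau>) (simp add: prob_space_imp_sigma_finite)
  moreover have "(\<lambda>(x, y). (x \<circ> \<tau>, y \<circ> \<tau>)) = permute_sample \<tau>"
    by (auto simp: permute_sample_def fun_eq_iff)
  ultimately show ?thesis
    using distr_PiM_comp_permutes[OF prob_space_M \<tau>]
      distr_PiM_comp_permutes[OF prob_space_std_normal_measure \<tau>]
    by simp
qed

lemma ranks_permute_sample:
  assumes \<tau>: "\<tau> permutes {1..n}" and \<omega>: "\<omega> \<in> space sample"
  shows "ranks (permute_sample \<tau> \<omega>) = ranks \<omega> \<circ> \<tau>"
proof -
  have D: "fst \<omega> \<in> space data" using \<omega> by (auto simp: space_pair_measure)
  have "score (permute_sample \<tau> \<omega>) i = (score \<omega> \<circ> \<tau>) i" if "i \<in> {1..n}" for i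
  proof -
    have "fst \<omega> (\<tau> i) \<in> space M"
      using D permutes_in_image[OF \<tau>] that by (auto simp: space_PiM)
    then have "S (fst \<omega> (\<tau> i)) (fst \<omega> \<circ> \<tau>) = S (fst \<omega> (\<tau> i)) (fst \<omega>)"
      using symmetric D \<tau> unfolding symmetric_transformation_def by blast
    then show ?thesis by (simp add: score_def scores_def permute_sample_def)
  qed
  then have "ranks (permute_sample \<tau> \<omega>) = rank_map n (score \<omega> \<circ> \<tau>)"
    unfolding ranks_def by (rule rank_map_cong)
  then show ?thesis
    unfolding ranks_def using rank_map_comp_permutes[OF \<tau>] by simp
qed

text \<open>Permuting the sample preserves its law and permutes the ranks.\<close>

lemma emeasure_ranks_permutes:
  assumes f: "f permutes {1..n}"
  shows "emeasure sample {\<omega> \<in> space sample. ranks \<omega> = f}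
       = emeasure sample {\<omega> \<in> space sample. ranks \<omega> = id}"
proof -
  have \<tau>: "inv f permutes {1..n}" by (rule permutes_inv[OF f])
  have comp_inv_eq_id: "g \<circ> inv f = id \<longleftrightarrow> g = f" for g :: "nat \<Rightarrow> nat"
    using permutes_inv_o[OF f] by (metis comp_assoc comp_id fun.map_id)
  have "ranks (permute_sample (inv f) \<omega>) = id \<longleftrightarrow> ranks \<omega> = f" if "\<omega> \<in> space sample" for \<omega>
    using that by (simp add: ranks_permute_sample[OF \<tau>] comp_inv_eq_id)
  then have preimage: "permute_sample (inv f) -` {\<omega> \<in> space sample. ranks \<omega> = id} \<inter> space sample
      = {\<omega> \<in> space sample. ranks \<omega> = f}"
    using measurable_space[OF measurable_permute_sample[OF \<tau>]] by blast
  have "emeasure (distr sample sample (permute_sample (inv f))) {\<omega> \<in> space sample. ranks \<omega> = id}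
      = emeasure sample (permute_sample (inv f) -` {\<omega> \<in> space sample. ranks \<omega> = id} \<inter> space sample)"
    by (rule emeasure_distr[OF measurable_permute_sample[OF \<tau>] sets_ranks_eq])
  also have "\<dots> = emeasure sample {\<omega> \<in> space sample. ranks \<omega> = f}"
    by (simp only: preimage)
  finally have "emeasure (distr sample sample (permute_sample (inv f))) {\<omega> \<in> space sample. ranks \<omega> = id}
      = emeasure sample {\<omega> \<in> space sample. ranks \<omega> = f}" .
  then show ?thesis unfolding distr_permute_sample[OF \<tau>] ..
qed

lemma measure_ranks_eq:
  "measure sample {\<omega> \<in> space sample. ranks \<omega> = f}
     = (if f permutes {1..n} then measure sample {\<omega> \<in> space sample. ranks \<omega> = id} else 0)"
proof (cases "f permutes {1..n}")
  case True
  then have "emeasure sample {\<omega> \<in> space sample. ranks \<omega> = f}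
      = emeasure sample {\<omega> \<in> space sample. ranks \<omega> = id}"
    by (rule emeasure_ranks_permutes)
  with True show ?thesis unfolding measure_def by simp
next
  case False
  then show ?thesis using emeasure_ranks_not_permutes[OF False] by (simp add: measure_def)
qed

lemma measure_ranks_vimage:
  "measure sample (ranks -` A \<inter> space sample)
     = card ({f. f permutes {1..n}} \<inter> A) / card {f. f permutes {1..n}}"
proof -
  interpret sample: prob_space sample by (rule prob_space_sample)
  define perms where "perms = {f. f permutes {1..n}}"
  define p where "p = measure sample {\<omega> \<in> space sample. ranks \<omega> = id}"
  have perms: "finite perms" "perms \<subseteq> self_maps n"
    unfolding perms_def using permutes_in_self_maps by (auto intro: finite_permutations)
  have vimage: "measure sample (ranks -` X \<inter> space sample) = card (X \<inter> perms) * p" for X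
  proof -
    have "ranks -` X \<inter> space sample = (\<Union>f\<in>X \<inter> self_maps n. {\<omega> \<in> space sample. ranks \<omega> = f})"
      using rank_map_in_self_maps by (auto simp: ranks_def)
    then have "measure sample (ranks -` X \<inter> space sample)
        = (\<Sum>f\<in>X \<inter> self_maps n. measure sample {\<omega> \<in> space sample. ranks \<omega> = f})"
      using finite_self_maps sets_ranks_eq
      by (simp only:) (intro sample.finite_measure_finite_Union, auto simp: disjoint_family_on_def)
    also have "\<dots> = (\<Sum>f\<in>X \<inter> self_maps n. if f \<in> perms then p else 0)"
      unfolding perms_def p_def mem_Collect_eq by (intro sum.cong refl measure_ranks_eq)
    also have "\<dots> = (\<Sum>f\<in>X \<inter> perms. p)"
      using perms finite_self_maps by (simp add: sum.If_cases Int_assoc Int_absorb1[OF perms(2)])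
    finally show ?thesis by simp
  qed
  have "card perms * p = 1"
    using vimage[of UNIV] sample.prob_space by simp
  then have "p = 1 / card perms"
    by (cases "card perms = 0") (auto simp: field_simps)
  then show ?thesis
    using vimage[of A] unfolding perms_def by (simp add: Int_commute)
qed

lemma distr_ranks: "distr sample (uniform_perm n) ranks = uniform_perm n"
proof (rule measure_eqI)
  interpret sample: prob_space sample by (rule prob_space_sample)
  fix A assume "A \<in> sets (distr sample (uniform_perm n) ranks)"
  have "ranks \<in> sample \<rightarrow>\<^sub>M uniform_perm n"
    using measurable_ranks by (simp add: uniform_perm_def)
  then have "emeasure (distr sample (uniform_perm n) ranks) A = emeasure sample (ranks -` A \<inter> space sample)"
    by (simp add: emeasure_distr uniform_perm_def)
  also have "\<dots> = ennreal (card ({f. f permutes {1..n}} \<inter> A) / card {f. f permutes {1..n}})"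
    by (simp only: sample.emeasure_eq_measure measure_ranks_vimage)
  also have "\<dots> = emeasure (uniform_perm n) A"
    unfolding uniform_perm_def
    by (subst measure_pmf.emeasure_eq_measure, subst measure_pmf_of_set)
       (auto intro: permutes_id finite_permutations)
  finally show "emeasure (distr sample (uniform_perm n) ranks) A = emeasure (uniform_perm n) A" .
qed simp

lemma ranks_fun_upd_PiM:
  fixes J :: "nat set" and i :: nat
  defines "\<Omega> \<equiv> data \<Otimes>\<^sub>M (noise \<Otimes>\<^sub>M PiM J (\<lambda>_. uniform_perm n))"
    and "\<Psi> \<equiv> \<lambda>(D, e, Ps). Ps(i := ranks (D, e))"
  shows "\<Psi> \<in> \<Omega> \<rightarrow>\<^sub>M PiM (insert i J) (\<lambda>_. uniform_perm n)"
    and "distr \<Omega> (PiM (insert i J) (\<lambda>_. uniform_perm n)) \<Psi> = PiM (insert i J) (\<lambda>_. uniform_perm n)"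
proof -
  let ?U = "uniform_perm n" and ?P = "PiM J (\<lambda>_. uniform_perm n)"
  let ?assoc = "\<lambda>(a, b, c). ((a, b), c)" and ?rank = "\<lambda>(\<omega>, Ps). (ranks \<omega>, Ps)"
    and ?upd = "\<lambda>(x, X). X(i := x)"
  have U: "prob_space ?U" by (simp add: uniform_perm_def prob_space_measure_pmf)
  have P: "prob_space ?P" by (intro prob_space_PiM U)
  have assoc: "?assoc \<in> \<Omega> \<rightarrow>\<^sub>M sample \<Otimes>\<^sub>M ?P"
    unfolding \<Omega>_def by measurable
  have rank: "?rank \<in> sample \<Otimes>\<^sub>M ?P \<rightarrow>\<^sub>M ?U \<Otimes>\<^sub>M ?P"
    using measurable_ranks by (simp add: uniform_perm_def) measurable
  have upd: "?upd \<in> ?U \<Otimes>\<^sub>M ?P \<rightarrow>\<^sub>M PiM (insert i J) (\<lambda>_. ?U)"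
    by measurable
  have \<Psi>: "\<Psi> = ?upd \<circ> (?rank \<circ> ?assoc)"
    by (auto simp: \<Psi>_def fun_eq_iff)
  then show "\<Psi> \<in> \<Omega> \<rightarrow>\<^sub>M PiM (insert i J) (\<lambda>_. uniform_perm n)"
    using measurable_comp[OF measurable_comp[OF assoc rank] upd] by simp
  have distr_assoc: "distr \<Omega> (sample \<Otimes>\<^sub>M ?P) ?assoc = sample \<Otimes>\<^sub>M ?P"
    unfolding \<Omega>_def using prob_space_data prob_space_noise P
    by (intro distr_pair_measure_assoc) (auto intro: prob_space_imp_sigma_finite)
  have distr_rank: "distr (sample \<Otimes>\<^sub>M ?P) (?U \<Otimes>\<^sub>M ?P) ?rank = ?U \<Otimes>\<^sub>M ?P"
  proof -
    have "ranks \<in> sample \<rightarrow>\<^sub>M ?U"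
      using measurable_ranks by (simp add: uniform_perm_def)
    then have "distr sample ?U ranks \<Otimes>\<^sub>M distr ?P ?P (\<lambda>x. x) = distr (sample \<Otimes>\<^sub>M ?P) (?U \<Otimes>\<^sub>M ?P) ?rank"
      using P by (intro pair_measure_distr measurable_ident_sets) (simp_all add: prob_space_imp_sigma_finite)
    then show ?thesis by (simp only: distr_ranks distr_id)
  qed
  have distr_upd: "distr (?U \<Otimes>\<^sub>M ?P) (PiM (insert i J) (\<lambda>_. ?U)) ?upd = PiM (insert i J) (\<lambda>_. ?U)"
    using U by (intro distr_pair_PiM_eq_PiM)
  show "distr \<Omega> (PiM (insert i J) (\<lambda>_. uniform_perm n)) \<Psi> = PiM (insert i J) (\<lambda>_. uniform_perm n)"
    unfolding \<Psi> distr_distr[OF upd measurable_comp[OF assoc rank], symmetric]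
      distr_distr[OF rank assoc, symmetric] distr_assoc distr_rank distr_upd ..
qed

lemma emeasure_ranks_exceeding_le:
  fixes g :: "(nat \<Rightarrow> nat) \<Rightarrow> real" and B k :: nat
  defines "\<Omega> \<equiv> data \<Otimes>\<^sub>M (noise \<Otimes>\<^sub>M PiM {1..B} (\<lambda>_. uniform_perm n))"
  defines "E \<equiv> {\<omega> \<in> space \<Omega>. case \<omega> of (D, e, Ps) \<Rightarrow>
                 k \<le> card {b \<in> {1..B}. g (Ps b) < g (ranks (D, e))}}"
  shows "E \<in> sets \<Omega>" and "emeasure \<Omega> E \<le> ennreal (real (B + 1 - k) / real (B + 1))"
proof -
  define U where "U = PiM {0..B} (\<lambda>_. uniform_perm n)"
  define \<Psi> where "\<Psi> = (\<lambda>(D, e, Ps). Ps((0::nat) := ranks (D, e)))"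
  define W where "W = {h \<in> space U. k \<le> card {j \<in> {0..B}. g (h j) < g (h 0)}}"
  have insert_0: "insert 0 {1..B} = {0..B}" by auto
  have \<Psi>: "\<Psi> \<in> \<Omega> \<rightarrow>\<^sub>M U" "distr \<Omega> U \<Psi> = U"
    using ranks_fun_upd_PiM[where J="{1..B}" and i=0] unfolding \<Omega>_def U_def \<Psi>_def insert_0 by auto
  have perms: "finite {\<pi>. \<pi> permutes {1..n}}" "{\<pi>. \<pi> permutes {1..n}} \<noteq> {}"
    by (simp add: finite_permutations) (metis empty_iff mem_Collect_eq permutes_id)
  have "(0::nat) \<in> {0..B}" by simp
  note bound = emeasure_PiM_pmf_of_set_exceeding_le[OF perms finite_atLeastAtMost this, where g=g and k=k]
  have W: "W \<in> sets U" "emeasure U W \<le> ennreal (real (B + 1 - k) / real (B + 1))"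
    using bound unfolding U_def W_def uniform_perm_def
    by (simp_all only: card_atLeastAtMost diff_zero Suc_eq_plus1)
  have "{j \<in> {0..B}. g ((Ps(0 := r)) j) < g r} = {b \<in> {1..B}. g (Ps b) < g r}" for Ps r
    by (auto simp: le_Suc_eq)
  then have "E = \<Psi> -` W \<inter> space \<Omega>"
    using measurable_space[OF \<Psi>(1)] by (auto simp: E_def W_def \<Psi>_def)
  then show E: "E \<in> sets \<Omega>" and "emeasure \<Omega> E \<le> ennreal (real (B + 1 - k) / real (B + 1))"
    using W \<Psi> emeasure_distr[OF \<Psi>(1) W(1)] by auto
qed

end

theorem corollary1:
  fixes M :: "'z measure" and n L B :: nat and I :: "nat \<Rightarrow> nat set"
    and S :: "'z \<Rightarrow> (nat \<Rightarrow> 'z) \<Rightarrow> real" and A :: "nat list \<Rightarrow> real"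
    and \<epsilon> \<alpha> :: real
  assumes "prob_space M"
    and "symmetric_transformation M n S"
    and "1 \<le> L" and "interval_family n L I"
    and "\<forall>xs. 0 \<le> A xs"
    and "\<epsilon> > 0" and "0 < \<alpha>" and "\<alpha> < 1" and "1 \<le> B"
  defines "\<Omega> \<equiv> PiM {1..n} (\<lambda>_. M) \<Otimes>\<^sub>M
                 (PiM {1..n} (\<lambda>_. std_normal_measure) \<Otimes>\<^sub>M PiM {1..B} (\<lambda>_. uniform_perm n))"
  shows "{\<omega> \<in> space \<Omega>. case \<omega> of (D, e, Ps) \<Rightarrow>
               ereal (Max ((\<lambda>l. test_stat A I (scores S \<epsilon> D e) l) ` {1..L}))
                 > threshold \<alpha> B (\<lambda>b. G_sup_norm A I L (Ps b))} \<in> sets \<Omega> \<and>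
    measure \<Omega> {\<omega> \<in> space \<Omega>. case \<omega> of (D, e, Ps) \<Rightarrow>
               ereal (Max ((\<lambda>l. test_stat A I (scores S \<epsilon> D e) l) ` {1..L}))
                 > threshold \<alpha> B (\<lambda>b. G_sup_norm A I L (Ps b))} \<le> \<alpha>"
proof -
  interpret symmetric_scoring M n S \<epsilon>
    by (rule symmetric_scoring.intro[OF assms(1,2,6)])
  interpret \<Omega>: prob_space \<Omega>
    unfolding \<Omega>_def
    by (intro prob_space_pair prob_space_data prob_space_noise prob_space_PiM)
       (simp add: uniform_perm_def prob_space_measure_pmf)
  define k where "k = threshold_index \<alpha> B"
  define G where "G = G_sup_norm A I L"
  define E where "E = {\<omega> \<in> space \<Omega>. case \<omega> of (D, e, Ps) \<Rightarrow>
                        k \<le> card {b \<in> {1..B}. G (Ps b) < G (ranks (D, e))}}"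
  have E: "E \<in> sets \<Omega>" "emeasure \<Omega> E \<le> ennreal (real (B + 1 - k) / real (B + 1))"
    unfolding E_def \<Omega>_def by (rule emeasure_ranks_exceeding_le)+
  have "{\<omega> \<in> space \<Omega>. case \<omega> of (D, e, Ps) \<Rightarrow>
               ereal (Max ((\<lambda>l. test_stat A I (scores S \<epsilon> D e) l) ` {1..L}))
                 > threshold \<alpha> B (\<lambda>b. G_sup_norm A I L (Ps b))} = (if k \<le> B then E else {})"
    using Max_test_stat_eq_G_sup_norm[OF assms(4) assms(5)[rule_format]] less_threshold_iff[OF assms(8)]
    by (auto simp: E_def k_def G_def ranks_def score_def)
  moreover have "measure \<Omega> E \<le> \<alpha>" if "k \<le> B"
  proof -
    have "measure \<Omega> E \<le> real (B + 1 - k) / real (B + 1)"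
      using E(2) by (simp add: \<Omega>.emeasure_eq_measure)
    then show ?thesis using threshold_index_tail_le[of \<alpha> B] that unfolding k_def by linarith
  qed
  ultimately show ?thesis using E(1) assms(7) by simp
qed

end
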